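(* Let $G$ be a finitely generated virtually nilpotent group and let $A$ be a finite subgroup of $\operatorname{Aut}(G)$ of cardinality $n$. Then the $n$-valued coset group $X=(G,A)$ has polynomial growth: for a finite generating set of $X$ there are constants $C,k>0$ such that $|B(e,r)|\le Cr^k$ for all $r\ge1$, where $B(e,r)$ is the ball of radius $r$ centred at the unit $e$ of $X$.
   Context: An $n$-valued group is a set $X$ with a map $*:X\times X\to\operatorname{Sym}^nX$ ($n$-multi-sets, i.e. unordered $n$-tuples with multiplicities) that is associative (the $n^2$-multi-sets $[x*(y*z)_1,\dots,x*(y*z)_n]$ and $[(x*y)_1*z,\dots,(x*y)_n*z]$ coincide), has a unit $e$ with $e*x=x*e=[x,\dots,x]$, and has an inverse map $\operatorname{inv}$ with $e\in\operatorname{inv}(x)*x$, $e\in x*\operatorname{inv}(x)$. Coset group: for a group $G$ and a finite subgroup $A\le\operatorname{Aut}(G)$ with $|A|=n$, let $X=G/A$ be the set of $A$-orbits and $\pi:G\to X$ the projection; the $n$-valued multiplication is $\pi(g)*\pi(h)=[\pi(g\,a(h)) : a\in A]$, the unit is $\pi(e_G)$ and $\operatorname{inv}(\pi(g))=\pi(g^{-1})$. For a multi-set $M$, $\operatorname{Set}(M)$ is the set of its distinct elements. $S\subseteq X$ generates $X$ if every element lies in $\operatorname{Set}(s_1*\dots*s_m)$ for some $s_i\in S$. The ball of radius $r$ centred at $x$ with respect to $S$ is $B(x,r)=\{y:\exists m\le r,\ s_{i_1},\dots,s_{i_m}\in S,\ y\in\operatorname{Set}(x*s_{i_1}*\dots*s_{i_m})\}$.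 A group is virtually nilpotent if it has a nilpotent subgroup of finite index. *)

theory Defs
  imports "HOL-Algebra.Algebra" "HOL-Library.Multiset"
begin

definition commutator_subgroup :: "('a, 'b) monoid_scheme \<Rightarrow> 'a set \<Rightarrow> 'a set \<Rightarrow> 'a set" where
  "commutator_subgroup G H K =
     generate G {x \<otimes>\<^bsub>G\<^esub> y \<otimes>\<^bsub>G\<^esub> inv\<^bsub>G\<^esub> x \<otimes>\<^bsub>G\<^esub> inv\<^bsub>G\<^esub> y | x y. x \<in> H \<and> y \<in> K}"

fun lower_central :: "('a, 'b) monoid_scheme \<Rightarrow> nat \<Rightarrow> 'a set" where
  "lower_central G 0 = carrier G"
| "lower_central G (Suc i) = commutator_subgroup G (lower_central G i) (carrier G)"

definition nilpotent_group :: "('a, 'b) monoid_scheme \<Rightarrow> bool" where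
  "nilpotent_group G \<longleftrightarrow> group G \<and> (\<exists>c. lower_central G c = {\<one>\<^bsub>G\<^esub>})"

definition finitely_generated :: "('a, 'b) monoid_scheme \<Rightarrow> bool" where
  "finitely_generated G \<longleftrightarrow> (\<exists>S. finite S \<and> S \<subseteq> carrier G \<and> generate G S = carrier G)"

definition virtually_nilpotent :: "('a, 'b) monoid_scheme \<Rightarrow> bool" where
  "virtually_nilpotent G \<longleftrightarrow>
     (\<exists>H. subgroup H G \<and> finite (rcosets\<^bsub>G\<^esub> H) \<and> nilpotent_group (G\<lparr>carrier := H\<rparr>))"

text \<open>Automorphisms are represented as functions restricted to the carrier (extensional),
  so that distinct automorphisms are distinct HOL functions.\<close>
definition Aut :: "('a, 'b) monoid_scheme \<Rightarrow> ('a \<Rightarrow> 'a) set" where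
  "Aut G = iso G G \<inter> extensional (carrier G)"

definition aut_subgroup :: "('a, 'b) monoid_scheme \<Rightarrow> ('a \<Rightarrow> 'a) set \<Rightarrow> bool" where
  "aut_subgroup G A \<longleftrightarrow> A \<subseteq> Aut G \<and>
     (\<lambda>x\<in>carrier G. x) \<in> A \<and>
     (\<forall>a\<in>A. \<forall>b\<in>A. (\<lambda>x\<in>carrier G. a (b x)) \<in> A) \<and>
     (\<forall>a\<in>A. restrict (inv_into (carrier G) a) (carrier G) \<in> A)"

definition orbit :: "('a \<Rightarrow> 'a) set \<Rightarrow> 'a \<Rightarrow> 'a set" where
  "orbit A g = (\<lambda>a. a g) ` A"

text \<open>Underlying set X = G/A of A-orbits, with projection pi = orbit A.\<close>
definition coset_carrier :: "('a, 'b) monoid_scheme \<Rightarrow> ('a \<Rightarrow> 'a) set \<Rightarrow> 'a set set" where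
  "coset_carrier G A = orbit A ` carrier G"

definition rep :: "('a, 'b) monoid_scheme \<Rightarrow> ('a \<Rightarrow> 'a) set \<Rightarrow> 'a set \<Rightarrow> 'a" where
  "rep G A x = (SOME g. g \<in> carrier G \<and> orbit A g = x)"

text \<open>pi(g) * pi(h) = [pi(g a(h)) : a in A] (as a multiset of size |A|).\<close>
definition cmult :: "('a, 'b) monoid_scheme \<Rightarrow> ('a \<Rightarrow> 'a) set \<Rightarrow> 'a set \<Rightarrow> 'a set \<Rightarrow> 'a set multiset" where
  "cmult G A x y = image_mset (\<lambda>a. orbit A (rep G A x \<otimes>\<^bsub>G\<^esub> a (rep G A y))) (mset_set A)"

definition cmult_ms :: "('a, 'b) monoid_scheme \<Rightarrow> ('a \<Rightarrow> 'a) set \<Rightarrow> 'a set multiset \<Rightarrow> 'a set \<Rightarrow> 'a set multiset" where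
  "cmult_ms G A M y = sum_mset (image_mset (\<lambda>m. cmult G A m y) M)"

text \<open>Iterated product x * s_1 * ... * s_m (left-bracketed; by associativity this is the product).\<close>
definition cprod :: "('a, 'b) monoid_scheme \<Rightarrow> ('a \<Rightarrow> 'a) set \<Rightarrow> 'a set \<Rightarrow> 'a set list \<Rightarrow> 'a set multiset" where
  "cprod G A x ss = foldl (cmult_ms G A) {#x#} ss"

definition cunit :: "('a, 'b) monoid_scheme \<Rightarrow> ('a \<Rightarrow> 'a) set \<Rightarrow> 'a set" where
  "cunit G A = orbit A \<one>\<^bsub>G\<^esub>"

definition cgenerates :: "('a, 'b) monoid_scheme \<Rightarrow> ('a \<Rightarrow> 'a) set \<Rightarrow> 'a set set \<Rightarrow> bool" where
  "cgenerates G A S \<longleftrightarrow> S \<subseteq> coset_carrier G A \<and>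
     (\<forall>x\<in>coset_carrier G A. \<exists>s ss. s \<in> S \<and> set ss \<subseteq> S \<and> x \<in> set_mset (cprod G A s ss))"

definition cball :: "('a, 'b) monoid_scheme \<Rightarrow> ('a \<Rightarrow> 'a) set \<Rightarrow> 'a set set \<Rightarrow> 'a set \<Rightarrow> nat \<Rightarrow> 'a set set" where
  "cball G A S x r = {y. \<exists>ss. length ss \<le> r \<and> set ss \<subseteq> S \<and> y \<in> set_mset (cprod G A x ss)}"

end

theory Submission
  imports Defs
begin

(* Every element of the ball B(e, r) of the coset group is the orbit of a word of length at most r
   in the finitely many lifts a(rep s), a in A, s in S, so it suffices that words over a finite
   subset of G grow polynomially.
   For a nilpotent group of class c this follows by collecting commutators. Layer j consists of the
   commutators of weight j + 1 in the letters and their inverses; layer c is trivial. Downwards in i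
   one shows that conjugating a letter of weight >= i by a word of length r gives a word of length
   poly(r) in the letters of weight >= i, and that there are poly(L) words of length L in these
   letters: moving the letters of weight i to the front changes the others only by such
   conjugations.
   Polynomial growth passes to overgroups of finite index, because Schreier rewriting turns a word
   of length L into a word of length L in finitely many elements of the subgroup, followed by one
   of finitely many coset representatives. *)

definition poly_bounded :: "(nat \<Rightarrow> nat) \<Rightarrow> bool" where
  "poly_bounded f \<longleftrightarrow> (\<exists>C k. \<forall>r. f r \<le> C * Suc r ^ k)"

lemma poly_bounded_le: "poly_bounded f \<Longrightarrow> (\<And>r. g r \<le> f r) \<Longrightarrow> poly_bounded g"
  unfolding poly_bounded_def by (meson le_trans)

lemma poly_bounded_const: "poly_bounded (\<lambda>_. c)"
  unfolding poly_bounded_def by (rule exI[of _ c], rule exI[of _ 0]) simp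

lemma poly_bounded_id: "poly_bounded (\<lambda>r. r)"
  unfolding poly_bounded_def by (rule exI[of _ 1], rule exI[of _ 1]) simp

lemma poly_bounded_add:
  assumes "poly_bounded f" "poly_bounded g"
  shows "poly_bounded (\<lambda>r. f r + g r)"
proof -
  obtain C1 k1 C2 k2 where f: "\<And>r. f r \<le> C1 * Suc r ^ k1" and g: "\<And>r. g r \<le> C2 * Suc r ^ k2"
    using assms unfolding poly_bounded_def by blast
  have "f r + g r \<le> (C1 + C2) * Suc r ^ (k1 + k2)" for r
  proof -
    have "Suc r ^ k1 \<le> Suc r ^ (k1 + k2)" "Suc r ^ k2 \<le> Suc r ^ (k1 + k2)"
      by (simp_all add: power_increasing)
    then have "f r \<le> C1 * Suc r ^ (k1 + k2)" "g r \<le> C2 * Suc r ^ (k1 + k2)"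
      using f[of r] g[of r] by (meson mult_le_mono2 order_trans)+
    then show ?thesis by (simp add: add_mult_distrib)
  qed
  then show ?thesis unfolding poly_bounded_def by blast
qed

lemma poly_bounded_mult:
  assumes "poly_bounded f" "poly_bounded g"
  shows "poly_bounded (\<lambda>r. f r * g r)"
proof -
  obtain C1 k1 C2 k2 where f: "\<And>r. f r \<le> C1 * Suc r ^ k1" and g: "\<And>r. g r \<le> C2 * Suc r ^ k2"
    using assms unfolding poly_bounded_def by blast
  have "f r * g r \<le> (C1 * C2) * Suc r ^ (k1 + k2)" for r
  proof -
    have "f r * g r \<le> (C1 * Suc r ^ k1) * (C2 * Suc r ^ k2)" using f g by (rule mult_le_mono)
    also have "\<dots> = (C1 * C2) * Suc r ^ (k1 + k2)" by (simp add: power_add)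
    finally show ?thesis .
  qed
  then show ?thesis unfolding poly_bounded_def by blast
qed

lemma poly_bounded_comp:
  assumes "poly_bounded f" "poly_bounded g"
  shows "poly_bounded (\<lambda>r. f (g r))"
proof -
  obtain C1 k1 C2 k2 where f: "\<And>r. f r \<le> C1 * Suc r ^ k1" and g: "\<And>r. g r \<le> C2 * Suc r ^ k2"
    using assms unfolding poly_bounded_def by blast
  have "f (g r) \<le> (C1 * Suc C2 ^ k1) * Suc r ^ (k2 * k1)" for r
  proof -
    have "1 \<le> Suc r ^ k2" by simp
    then have "Suc (g r) \<le> Suc r ^ k2 + C2 * Suc r ^ k2"
      using g[of r] by linarith
    then have "Suc (g r) \<le> Suc C2 * Suc r ^ k2" by simp
    then have "Suc (g r) ^ k1 \<le> (Suc C2 * Suc r ^ k2) ^ k1"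
      by (rule power_mono) simp
    also have "\<dots> = Suc C2 ^ k1 * Suc r ^ (k2 * k1)"
      by (simp only: power_mult_distrib power_mult)
    finally have "C1 * Suc (g r) ^ k1 \<le> C1 * (Suc C2 ^ k1 * Suc r ^ (k2 * k1))"
      by (rule mult_le_mono2)
    with f[of "g r"] show ?thesis
      unfolding mult.assoc by (rule le_trans)
  qed
  then show ?thesis unfolding poly_bounded_def by blast
qed

lemma poly_bounded_powr_bound:
  assumes "poly_bounded f"
  shows "\<exists>C k::real. C > 0 \<and> k > 0 \<and> (\<forall>r::nat. r \<ge> 1 \<longrightarrow> real (f r) \<le> C * real r powr k)"
proof -
  obtain C k where f: "\<And>r. f r \<le> C * Suc r ^ k"
    using assms unfolding poly_bounded_def by blast
  have "real (f r) \<le> real (C * 2 ^ k + 1) * real r powr real (k + 1)" if r: "r \<ge> 1" for r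
  proof -
    have "Suc r ^ k \<le> (2 * r) ^ k" using r by (intro power_mono) auto
    also have "\<dots> = 2 ^ k * r ^ k" by (rule power_mult_distrib)
    also have "\<dots> \<le> 2 ^ k * r ^ (k + 1)"
      using r by (intro mult_le_mono2 power_increasing) auto
    finally have "C * Suc r ^ k \<le> C * (2 ^ k * r ^ (k + 1))" by (rule mult_le_mono2)
    then have "f r \<le> (C * 2 ^ k) * r ^ (k + 1)"
      using f[of r] by (simp only: mult.assoc)
    then have "real (f r) \<le> real (C * 2 ^ k) * real r ^ (k + 1)"
      by (simp flip: of_nat_mult of_nat_power)
    also have "\<dots> \<le> real (C * 2 ^ k + 1) * real r ^ (k + 1)"
      by (intro mult_right_mono) auto
    also have "real r ^ (k + 1) = real r powr real (k + 1)"
      using r by (subst powr_realpow) auto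
    finally show ?thesis .
  qed
  moreover have "real (C * 2 ^ k + 1) > 0" "real (k + 1) > 0" by (simp_all add: add_pos_nonneg)
  ultimately show ?thesis by blast
qed

definition word_prod :: "('a, 'b) monoid_scheme \<Rightarrow> 'a list \<Rightarrow> 'a" where
  "word_prod G xs = foldr (\<lambda>x y. x \<otimes>\<^bsub>G\<^esub> y) xs \<one>\<^bsub>G\<^esub>"

definition word_ball :: "('a, 'b) monoid_scheme \<Rightarrow> 'a set \<Rightarrow> nat \<Rightarrow> 'a set" where
  "word_ball G U L = word_prod G ` {xs. set xs \<subseteq> U \<and> length xs \<le> L}"

lemma word_prod_Nil [simp]: "word_prod G [] = \<one>\<^bsub>G\<^esub>"
  by (simp add: word_prod_def)

lemma word_prod_Cons [simp]: "word_prod G (x # xs) = x \<otimes>\<^bsub>G\<^esub> word_prod G xs"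
  by (simp add: word_prod_def)

lemma word_ballI: "set xs \<subseteq> U \<Longrightarrow> length xs \<le> L \<Longrightarrow> word_prod G xs \<in> word_ball G U L"
  unfolding word_ball_def by blast

lemma word_ballE:
  assumes "y \<in> word_ball G U L"
  obtains xs where "set xs \<subseteq> U" "length xs \<le> L" "y = word_prod G xs"
  using assms unfolding word_ball_def by blast

lemma finite_word_ball: "finite U \<Longrightarrow> finite (word_ball G U L)"
  unfolding word_ball_def by (intro finite_imageI finite_lists_length_le)

lemma word_ball_mono: "U \<subseteq> U' \<Longrightarrow> L \<le> L' \<Longrightarrow> word_ball G U L \<subseteq> word_ball G U' L'"
  unfolding word_ball_def by auto

lemma one_in_word_ball: "\<one>\<^bsub>G\<^esub> \<in> word_ball G U L"
  using word_ballI[of "[]"] by simp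

lemma word_ball_empty: "word_ball G {} L = {\<one>\<^bsub>G\<^esub>}"
  unfolding word_ball_def by auto

lemma word_ball_subgroup: "word_ball (G\<lparr>carrier := H\<rparr>) U L = word_ball G U L"
proof -
  have "word_prod (G\<lparr>carrier := H\<rparr>) xs = word_prod G xs" for xs
    by (induction xs) auto
  then show ?thesis unfolding word_ball_def by simp
qed

context monoid
begin

lemma word_prod_closed: "set xs \<subseteq> carrier G \<Longrightarrow> word_prod G xs \<in> carrier G"
  by (induction xs) auto

lemma word_prod_append:
  "set xs \<subseteq> carrier G \<Longrightarrow> set ys \<subseteq> carrier G \<Longrightarrow> word_prod G (xs @ ys) = word_prod G xs \<otimes> word_prod G ys"
  by (induction xs) (auto simp: m_assoc word_prod_closed)

lemma word_ball_closed: "U \<subseteq> carrier G \<Longrightarrow> word_ball G U L \<subseteq> carrier G"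
  unfolding word_ball_def using word_prod_closed by auto

lemma word_ball_mult:
  assumes U: "U \<subseteq> carrier G" and "x \<in> word_ball G U a" "y \<in> word_ball G U b"
  shows "x \<otimes> y \<in> word_ball G U (a + b)"
proof -
  obtain xs ys where xs: "set xs \<subseteq> U" "length xs \<le> a" "x = word_prod G xs"
    and ys: "set ys \<subseteq> U" "length ys \<le> b" "y = word_prod G ys"
    using assms(2,3) by (auto elim!: word_ballE)
  have "x \<otimes> y = word_prod G (xs @ ys)"
    using xs ys U by (simp add: word_prod_append)
  moreover have "word_prod G (xs @ ys) \<in> word_ball G U (a + b)"
    using xs ys by (intro word_ballI) auto
  ultimately show ?thesis by simp
qed

lemma generator_in_word_ball: "U \<subseteq> carrier G \<Longrightarrow> u \<in> U \<Longrightarrow> 1 \<le> L \<Longrightarrow> u \<in> word_ball G U L"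
  using word_ballI[of "[u]" U L G] by auto

lemma word_ball_pow:
  assumes "U \<subseteq> carrier G" "v \<in> word_ball G U L"
  shows "v [^] (e::nat) \<in> word_ball G U (e * L)"
proof (induction e)
  case 0
  then show ?case by (simp add: one_in_word_ball)
next
  case (Suc e)
  then show ?case
    using word_ball_mult[OF assms(1) Suc assms(2)] by (simp add: add.commute)
qed

end

context group
begin

lemma inv_word_prod:
  "set xs \<subseteq> carrier G \<Longrightarrow> inv (word_prod G xs) = word_prod G (rev (map (m_inv G) xs))"
proof (induction xs)
  case (Cons a xs)
  then have "set (rev (map (m_inv G) xs)) \<subseteq> carrier G" by auto
  with Cons show ?case by (simp add: inv_mult_group word_prod_closed word_prod_append)
qed simp

lemma word_ball_inv:
  assumes U: "U \<subseteq> carrier G" "m_inv G ` U \<subseteq> U" and x: "x \<in> word_ball G U L"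
  shows "inv x \<in> word_ball G U L"
proof -
  obtain xs where xs: "set xs \<subseteq> U" "length xs \<le> L" "x = word_prod G xs"
    using x by (auto elim: word_ballE)
  then have "inv x = word_prod G (rev (map (m_inv G) xs))"
    using U by (simp add: inv_word_prod subset_trans)
  moreover have "set (rev (map (m_inv G) xs)) \<subseteq> U" using xs U by auto
  ultimately show ?thesis using xs by (auto intro!: word_ballI)
qed

end

section \<open>Commutators and collection\<close>

definition comm :: "('a, 'b) monoid_scheme \<Rightarrow> 'a \<Rightarrow> 'a \<Rightarrow> 'a" where
  "comm G u t = inv\<^bsub>G\<^esub> u \<otimes>\<^bsub>G\<^esub> inv\<^bsub>G\<^esub> t \<otimes>\<^bsub>G\<^esub> u \<otimes>\<^bsub>G\<^esub> t"

definition conjg :: "('a, 'b) monoid_scheme \<Rightarrow> 'a \<Rightarrow> 'a \<Rightarrow> 'a" where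
  "conjg G g x = inv\<^bsub>G\<^esub> g \<otimes>\<^bsub>G\<^esub> x \<otimes>\<^bsub>G\<^esub> g"

definition conj_bounded :: "('a, 'b) monoid_scheme \<Rightarrow> 'a set \<Rightarrow> 'a set \<Rightarrow> (nat \<Rightarrow> nat) \<Rightarrow> bool" where
  "conj_bounded G F U f \<longleftrightarrow>
     (\<forall>r. \<forall>g\<in>word_ball G F r. \<forall>x\<in>U. conjg G g x \<in> word_ball G U (f r))"

context group
begin

lemma comm_closed [simp]: "u \<in> carrier G \<Longrightarrow> t \<in> carrier G \<Longrightarrow> comm G u t \<in> carrier G"
  by (simp add: comm_def)

lemma conjg_closed [simp]: "g \<in> carrier G \<Longrightarrow> x \<in> carrier G \<Longrightarrow> conjg G g x \<in> carrier G"
  by (simp add: conjg_def)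

lemma conjg_eq_mult_comm: "g \<in> carrier G \<Longrightarrow> x \<in> carrier G \<Longrightarrow> conjg G g x = x \<otimes> comm G x g"
  by (simp add: conjg_def comm_def m_assoc[symmetric] r_inv)

lemma mult_eq_mult_conjg: "g \<in> carrier G \<Longrightarrow> x \<in> carrier G \<Longrightarrow> x \<otimes> g = g \<otimes> conjg G g x"
  by (simp add: conjg_def m_assoc[symmetric] r_inv)

lemma mult_inv_cancel_left: "g \<in> carrier G \<Longrightarrow> x \<in> carrier G \<Longrightarrow> g \<otimes> (inv g \<otimes> x) = x"
  by (simp add: m_assoc[symmetric])

lemma inv_mult_cancel_left: "g \<in> carrier G \<Longrightarrow> x \<in> carrier G \<Longrightarrow> inv g \<otimes> (g \<otimes> x) = x"
  by (simp add: m_assoc[symmetric])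

lemma comm_mult_right:
  "u \<in> carrier G \<Longrightarrow> t \<in> carrier G \<Longrightarrow> g \<in> carrier G \<Longrightarrow>
    comm G u (t \<otimes> g) = comm G u g \<otimes> conjg G g (comm G u t)"
  by (simp add: conjg_def comm_def m_assoc inv_mult_group mult_inv_cancel_left inv_mult_cancel_left)

lemma comm_word_ball:
  assumes U: "U \<subseteq> carrier G" and F: "F \<subseteq> carrier G" and u: "u \<in> carrier G"
    and conj: "\<forall>g\<in>word_ball G F r. \<forall>x\<in>U. conjg G g x \<in> word_ball G U m"
    and comm_gen: "\<forall>t\<in>F. comm G u t \<in> U \<union> {\<one>}"
    and g: "g \<in> word_ball G F r"
  shows "comm G u g \<in> word_ball G U (r * m)"
proof -
  have "comm G u (word_prod G xs) \<in> word_ball G U (length xs * m)"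
    if "set xs \<subseteq> F" "length xs \<le> r" for xs
    using that
  proof (induction xs)
    case Nil
    then show ?case using u by (simp add: comm_def l_inv one_in_word_ball)
  next
    case (Cons t xs)
    let ?w = "word_prod G xs"
    have t: "t \<in> carrier G" and w: "?w \<in> carrier G"
      using Cons.prems F by (auto intro: word_prod_closed)
    have "?w \<in> word_ball G F r"
      using Cons.prems by (intro word_ballI) auto
    then have "conjg G ?w (comm G u t) \<in> word_ball G U m"
      using conj comm_gen Cons.prems w
      by (cases "comm G u t = \<one>") (auto simp: conjg_def one_in_word_ball)
    then have "comm G u ?w \<otimes> conjg G ?w (comm G u t) \<in> word_ball G U (length xs * m + m)"
      using Cons by (intro word_ball_mult[OF U]) auto
    then show ?case
      using comm_mult_right[OF u t w] by (simp add: add.commute)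
  qed
  moreover obtain xs where xs: "set xs \<subseteq> F" "length xs \<le> r" "g = word_prod G xs"
    using g by (auto elim: word_ballE)
  moreover have "word_ball G U (length xs * m) \<subseteq> word_ball G U (r * m)"
    using xs(2) by (intro word_ball_mono) auto
  ultimately show ?thesis by blast
qed

text \<open>Each occurrence of \<open>v\<close> is moved to the front; a letter \<open>x\<close> of \<open>S\<close> that it passes
  is replaced by its conjugate under the power of \<open>v\<close> collected so far.\<close>

lemma word_prod_collect_power:
  assumes S: "S \<subseteq> carrier G" and v: "v \<in> carrier G"
    and conj: "\<And>e x. e \<le> L \<Longrightarrow> x \<in> S \<Longrightarrow> conjg G (v [^] e) x \<in> word_ball G S B"
    and xs: "set xs \<subseteq> insert v S" "length xs \<le> L"
  shows "\<exists>e\<le>length xs. \<exists>w\<in>word_ball G S (length xs * B). word_prod G xs = v [^] e \<otimes> w"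
  using xs
proof (induction xs)
  case Nil
  have "\<one> \<in> word_ball G S 0" by (rule one_in_word_ball)
  then show ?case by (auto intro!: exI[of _ 0] bexI[of _ "\<one>"])
next
  case (Cons x xs)
  then obtain e w where e: "e \<le> length xs" and w: "w \<in> word_ball G S (length xs * B)"
    and xs_eq: "word_prod G xs = v [^] e \<otimes> w"
    by auto
  have wc: "w \<in> carrier G" using w word_ball_closed[OF S] by blast
  have w': "w \<in> word_ball G S (length (x # xs) * B)"
    using w word_ball_mono[OF order_refl, of "length xs * B" "length (x # xs) * B" G S] by auto
  show ?case
  proof (cases "x = v")
    case True
    then have "word_prod G (x # xs) = (v \<otimes> v [^] e) \<otimes> w"
      using xs_eq v wc by (simp add: m_assoc)
    also have "v \<otimes> v [^] e = v [^] Suc e"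
      using v by (rule nat_pow_Suc2[symmetric])
    finally have "word_prod G (x # xs) = v [^] Suc e \<otimes> w" .
    then show ?thesis using e w' by (intro exI[of _ "Suc e"]) auto
  next
    case False
    then have x: "x \<in> S" using Cons.prems by auto
    have xc: "x \<in> carrier G" using x S by blast
    have "word_prod G (x # xs) = (x \<otimes> v [^] e) \<otimes> w"
      using xs_eq xc v wc by (simp add: m_assoc)
    also have "\<dots> = v [^] e \<otimes> (conjg G (v [^] e) x \<otimes> w)"
      using xc v wc by (simp add: mult_eq_mult_conjg[of "v [^] e" x] m_assoc)
    finally have eq: "word_prod G (x # xs) = v [^] e \<otimes> (conjg G (v [^] e) x \<otimes> w)" .
    have "conjg G (v [^] e) x \<in> word_ball G S B"
      using conj x e Cons.prems(2) by simp
    then have "conjg G (v [^] e) x \<otimes> w \<in> word_ball G S (length (x # xs) * B)"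
      using word_ball_mult[OF S _ w] by (simp add: add.commute)
    then show ?thesis using eq e by (intro exI[of _ e]) auto
  qed
qed

lemma card_word_ball_insert_le:
  assumes S: "S \<subseteq> carrier G" "finite S" and v: "v \<in> carrier G"
    and conj: "\<And>e x. e \<le> L \<Longrightarrow> x \<in> S \<Longrightarrow> conjg G (v [^] e) x \<in> word_ball G S B"
  shows "card (word_ball G (insert v S) L) \<le> (L + 1) * card (word_ball G S (L * B))"
proof -
  let ?P = "{..L} \<times> word_ball G S (L * B)"
  let ?f = "\<lambda>(e, w). v [^] e \<otimes> w"
  have sub: "word_ball G (insert v S) L \<subseteq> ?f ` ?P"
  proof
    fix y assume "y \<in> word_ball G (insert v S) L"
    then obtain xs where xs: "set xs \<subseteq> insert v S" "length xs \<le> L" "y = word_prod G xs"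
      by (auto elim: word_ballE)
    then obtain e w where "e \<le> length xs" "w \<in> word_ball G S (length xs * B)" "y = v [^] e \<otimes> w"
      using word_prod_collect_power[OF S(1) v conj xs(1,2)] by auto
    moreover have "word_ball G S (length xs * B) \<subseteq> word_ball G S (L * B)"
      using xs(2) by (intro word_ball_mono) auto
    ultimately show "y \<in> ?f ` ?P"
      using xs(2) by (intro image_eqI[of _ _ "(e, w)"]) auto
  qed
  have fin: "finite ?P" using finite_word_ball[OF S(2)] by blast
  have "card (word_ball G (insert v S) L) \<le> card (?f ` ?P)"
    using sub fin by (intro card_mono) auto
  also have "\<dots> \<le> card ?P"
    using fin by (rule card_image_le)
  finally show ?thesis by (simp add: card_cartesian_product)
qed

end

section \<open>Commutator layers of a nilpotent group\<close>

definition sym_closure :: "('a, 'b) monoid_scheme \<Rightarrow> 'a set \<Rightarrow> 'a set" where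
  "sym_closure G V = V \<union> m_inv G ` V"

fun comm_layer :: "('a, 'b) monoid_scheme \<Rightarrow> 'a set \<Rightarrow> nat \<Rightarrow> 'a set" where
  "comm_layer G T 0 = sym_closure G T"
| "comm_layer G T (Suc j) =
     sym_closure G ((\<lambda>(u, t). comm G u t) ` (comm_layer G T j \<times> comm_layer G T 0))"

declare comm_layer.simps(2) [simp del]

definition comm_layers_from :: "('a, 'b) monoid_scheme \<Rightarrow> 'a set \<Rightarrow> nat \<Rightarrow> nat \<Rightarrow> 'a set" where
  "comm_layers_from G T c i = (\<Union>j\<in>{i..<c}. comm_layer G T j)"

lemma finite_sym_closure: "finite V \<Longrightarrow> finite (sym_closure G V)"
  by (simp add: sym_closure_def)

lemma finite_comm_layer: "finite T \<Longrightarrow> finite (comm_layer G T j)"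
  by (induction j) (auto simp: finite_sym_closure comm_layer.simps)

lemma finite_comm_layers_from: "finite T \<Longrightarrow> finite (comm_layers_from G T c i)"
  by (simp add: comm_layers_from_def finite_comm_layer)

lemma comm_layers_from_ge: "c \<le> i \<Longrightarrow> comm_layers_from G T c i = {}"
  by (simp add: comm_layers_from_def)

lemma comm_layers_from_Suc: "i < c \<Longrightarrow> comm_layers_from G T c i = comm_layer G T i \<union> comm_layers_from G T c (Suc i)"
proof -
  assume "i < c"
  then have "{i..<c} = insert i {Suc i..<c}" by auto
  then show ?thesis by (simp add: comm_layers_from_def)
qed

context group
begin

lemma sym_closure_closed: "V \<subseteq> carrier G \<Longrightarrow> sym_closure G V \<subseteq> carrier G"
  by (auto simp: sym_closure_def)

lemma inv_sym_closure: "V \<subseteq> carrier G \<Longrightarrow> m_inv G ` sym_closure G V \<subseteq> sym_closure G V"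
  by (auto simp: sym_closure_def subset_iff)

lemma comm_layer_closed: "T \<subseteq> carrier G \<Longrightarrow> comm_layer G T j \<subseteq> carrier G"
  by (induction j) (auto simp: sym_closure_def subset_iff comm_layer.simps)

lemma comm_layers_from_closed: "T \<subseteq> carrier G \<Longrightarrow> comm_layers_from G T c i \<subseteq> carrier G"
  using comm_layer_closed by (auto simp: comm_layers_from_def)

lemma comm_in_comm_layer:
  "u \<in> comm_layer G T j \<Longrightarrow> t \<in> comm_layer G T 0 \<Longrightarrow> comm G u t \<in> comm_layer G T (Suc j)"
  unfolding comm_layer.simps(2) sym_closure_def by (intro UnI1 image_eqI[of _ _ "(u, t)"]) auto

lemma lower_central_subgroup: "subgroup (lower_central G j) G"
proof (induction j)
  case (Suc j)
  then have "{x \<otimes> y \<otimes> inv x \<otimes> inv y | x y. x \<in> lower_central G j \<and> y \<in> carrier G} \<subseteq> carrier G"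
    using subgroup.subset by fastforce
  then show ?case by (simp add: commutator_subgroup_def generate_is_subgroup)
qed (simp add: subgroup_self)

lemma comm_layer_lower_central: "T \<subseteq> carrier G \<Longrightarrow> comm_layer G T j \<subseteq> lower_central G j"
proof (induction j)
  case 0
  then show ?case by (auto simp: sym_closure_def)
next
  case (Suc j)
  interpret L: subgroup "lower_central G j" G by (rule lower_central_subgroup)
  interpret L': subgroup "lower_central G (Suc j)" G by (rule lower_central_subgroup)
  have "comm G u t \<in> lower_central G (Suc j)"
    if u: "u \<in> comm_layer G T j" and t: "t \<in> comm_layer G T 0" for u t
  proof -
    have "u \<in> lower_central G j" "t \<in> carrier G"
      using Suc u t comm_layer_closed[of T 0] by auto
    moreover have "comm G u t = inv u \<otimes> inv t \<otimes> inv (inv u) \<otimes> inv (inv t)"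
      using calculation by (simp add: comm_def)
    ultimately show ?thesis
      unfolding lower_central.simps commutator_subgroup_def by (blast intro: generate.incl)
  qed
  then have "(\<lambda>(u, t). comm G u t) ` (comm_layer G T j \<times> comm_layer G T 0) \<subseteq> lower_central G (Suc j)"
    by (auto simp del: lower_central.simps comm_layer.simps)
  then show ?case
    unfolding comm_layer.simps(2) sym_closure_def using L'.m_inv_closed by blast
qed

lemma comm_layer_word_ball:
  "T \<subseteq> carrier G \<Longrightarrow> comm_layer G T j \<subseteq> word_ball G (sym_closure G T) (4 ^ j)"
proof (induction j)
  case 0
  then show ?case using generator_in_word_ball[OF sym_closure_closed] by auto
next
  case (Suc j)
  let ?F = "sym_closure G T"
  have F: "?F \<subseteq> carrier G" "m_inv G ` ?F \<subseteq> ?F"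
    using Suc.prems by (simp_all add: sym_closure_closed inv_sym_closure)
  have "comm G u t \<in> word_ball G ?F (4 ^ Suc j)"
    if u: "u \<in> comm_layer G T j" and t: "t \<in> ?F" for u t
  proof -
    have "u \<in> word_ball G ?F (4 ^ j)" "t \<in> word_ball G ?F 1"
      using Suc u t generator_in_word_ball[OF F(1)] by auto
    then have "comm G u t \<in> word_ball G ?F (4 ^ j + 1 + 4 ^ j + 1)"
      unfolding comm_def by (intro word_ball_mult word_ball_inv F)
    moreover have "4 ^ j + 1 + 4 ^ j + 1 \<le> (4::nat) ^ Suc j"
      using one_le_power[of "4::nat" j] by simp
    ultimately show ?thesis using word_ball_mono[of ?F ?F] by blast
  qed
  then show ?case
    unfolding comm_layer.simps(2) sym_closure_def[of G "(\<lambda>(u, t). comm G u t) ` _"]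
    using word_ball_inv[OF F] by auto
qed

end

locale nilpotent_words = group +
  fixes T :: "'a set" and c :: nat
  assumes gens_closed: "T \<subseteq> carrier G" and finite_gens: "finite T"
    and lower_central_trivial: "lower_central G c = {\<one>}"
begin

abbreviation layers_from :: "nat \<Rightarrow> 'a set" where
  "layers_from i \<equiv> comm_layers_from G T c i"

lemma gens_sym_closed: "sym_closure G T \<subseteq> carrier G"
  using sym_closure_closed[OF gens_closed] .

lemma comm_layer_comm_gen:
  assumes "i < c" "u \<in> comm_layer G T i" "t \<in> sym_closure G T"
  shows "comm G u t \<in> layers_from (Suc i) \<union> {\<one>}"
proof -
  have u: "comm G u t \<in> comm_layer G T (Suc i)"
    using assms(2,3) comm_in_comm_layer by simp
  show ?thesis
  proof (cases "Suc i < c")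
    case True
    then have "comm_layer G T (Suc i) \<subseteq> layers_from (Suc i)"
      unfolding comm_layers_from_def by (intro UN_upper) simp
    then show ?thesis using u by blast
  next
    case False
    then have "Suc i = c" using assms(1) by simp
    then show ?thesis
      using u comm_layer_lower_central[OF gens_closed, of c] lower_central_trivial by auto
  qed
qed

lemma conj_bounded_extend:
  assumes i: "i < c" and V: "V \<subseteq> comm_layer G T i"
    and conj: "conj_bounded G (sym_closure G T) (layers_from (Suc i)) f"
  shows "conj_bounded G (sym_closure G T) (V \<union> layers_from (Suc i)) (\<lambda>r. (r + 1) * f r + 1)"
  unfolding conj_bounded_def
proof (intro allI ballI)
  fix r g x
  assume g: "g \<in> word_ball G (sym_closure G T) r" and x: "x \<in> V \<union> layers_from (Suc i)"
  let ?U = "V \<union> layers_from (Suc i)"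
  have U: "?U \<subseteq> carrier G"
    using V comm_layer_closed[OF gens_closed] comm_layers_from_closed[OF gens_closed] by blast
  have mono: "word_ball G (layers_from (Suc i)) m \<subseteq> word_ball G ?U m'" if "m \<le> m'" for m m'
    using that by (intro word_ball_mono) auto
  show "conjg G g x \<in> word_ball G ?U ((r + 1) * f r + 1)"
  proof (cases "x \<in> layers_from (Suc i)")
    case True
    then have "conjg G g x \<in> word_ball G (layers_from (Suc i)) (f r)"
      using conj g unfolding conj_bounded_def by blast
    then show ?thesis using mono[of "f r" "(r + 1) * f r + 1"] by auto
  next
    case False
    then have xV: "x \<in> comm_layer G T i" using x V by blast
    have xc: "x \<in> carrier G" and gc: "g \<in> carrier G"
      using x U g word_ball_closed[OF gens_sym_closed] by blast+
    have "comm G x g \<in> word_ball G (layers_from (Suc i)) (r * f r)"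
      using comm_word_ball[OF comm_layers_from_closed[OF gens_closed] gens_sym_closed xc _ _ g]
        conj comm_layer_comm_gen[OF i xV] unfolding conj_bounded_def by blast
    then have "comm G x g \<in> word_ball G ?U (r * f r)" using mono by blast
    moreover have "x \<in> word_ball G ?U 1"
      using x U by (intro generator_in_word_ball) auto
    ultimately have "x \<otimes> comm G x g \<in> word_ball G ?U (1 + r * f r)"
      by (intro word_ball_mult U)
    moreover have "word_ball G ?U (1 + r * f r) \<subseteq> word_ball G ?U ((r + 1) * f r + 1)"
      by (intro word_ball_mono) auto
    ultimately show ?thesis using conjg_eq_mult_comm[OF gc xc] by auto
  qed
qed

lemma conj_bounded_layers_from:
  "i \<le> c \<Longrightarrow> \<exists>f. poly_bounded f \<and> conj_bounded G (sym_closure G T) (layers_from i) f"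
proof (induction rule: inc_induct)
  case base
  show ?case
    using poly_bounded_const by (auto simp: conj_bounded_def comm_layers_from_ge)
next
  case (step i)
  then obtain f where f: "poly_bounded f" "conj_bounded G (sym_closure G T) (layers_from (Suc i)) f"
    by blast
  have "poly_bounded (\<lambda>r. (r + 1) * f r + 1)"
    by (intro poly_bounded_add poly_bounded_mult poly_bounded_id poly_bounded_const f(1))
  moreover have "conj_bounded G (sym_closure G T) (layers_from i) (\<lambda>r. (r + 1) * f r + 1)"
    using conj_bounded_extend[OF step(2) order_refl f(2)]
    unfolding comm_layers_from_Suc[OF step(2)] .
  ultimately show ?case by blast
qed

lemma word_growth_extend:
  assumes i: "i < c" and growth: "poly_bounded (\<lambda>L. card (word_ball G (layers_from (Suc i)) L))"
  shows "finite V \<Longrightarrow> V \<subseteq> comm_layer G T i \<Longrightarrow>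
    poly_bounded (\<lambda>L. card (word_ball G (V \<union> layers_from (Suc i)) L))"
proof (induction V rule: finite_induct)
  case empty
  then show ?case using growth by simp
next
  case (insert v V)
  let ?S = "V \<union> layers_from (Suc i)"
  obtain f where f: "poly_bounded f" "conj_bounded G (sym_closure G T) (layers_from (Suc i)) f"
    using conj_bounded_layers_from[of "Suc i"] i by auto
  define f' where "f' r = (r + 1) * f r + 1" for r
  have conj: "conj_bounded G (sym_closure G T) ?S f'"
    unfolding f'_def using conj_bounded_extend[OF i _ f(2)] insert.prems by blast
  have "V \<subseteq> carrier G"
    using insert.prems comm_layer_closed[OF gens_closed] by blast
  then have S: "?S \<subseteq> carrier G" "finite ?S"
    using insert.hyps(1) comm_layers_from_closed[OF gens_closed] finite_comm_layers_from[OF finite_gens]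
    by auto
  have vW: "v \<in> word_ball G (sym_closure G T) (4 ^ i)"
    using insert.prems comm_layer_word_ball[OF gens_closed] by blast
  have vc: "v \<in> carrier G" using vW word_ball_closed[OF gens_sym_closed] by blast
  have "card (word_ball G (insert v ?S) L) \<le> (L + 1) * card (word_ball G ?S (L * f' (L * 4 ^ i)))" for L
  proof (rule card_word_ball_insert_le[OF S vc])
    fix e x assume e: "e \<le> L" and x: "x \<in> ?S"
    have "v [^] e \<in> word_ball G (sym_closure G T) (e * 4 ^ i)"
      using word_ball_pow[OF gens_sym_closed vW] .
    then have "v [^] e \<in> word_ball G (sym_closure G T) (L * 4 ^ i)"
      using e word_ball_mono[OF order_refl mult_le_mono1[OF e], of G "sym_closure G T" "4 ^ i"]
      by blast
    then show "conjg G (v [^] e) x \<in> word_ball G ?S (f' (L * 4 ^ i))"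
      using conj x unfolding conj_bounded_def by blast
  qed
  moreover have "poly_bounded (\<lambda>L. (L + 1) * card (word_ball G ?S (L * f' (L * 4 ^ i))))"
    unfolding f'_def
    by (intro poly_bounded_mult poly_bounded_add poly_bounded_id poly_bounded_const
        poly_bounded_comp[OF insert.IH] poly_bounded_comp[OF f(1)]) (use insert.prems in auto)
  ultimately show ?case by (auto intro: poly_bounded_le)
qed

lemma word_growth_layers_from: "i \<le> c \<Longrightarrow> poly_bounded (\<lambda>L. card (word_ball G (layers_from i) L))"
proof (induction rule: inc_induct)
  case base
  show ?case by (simp add: comm_layers_from_ge word_ball_empty poly_bounded_const)
next
  case (step i)
  then show ?case
    using word_growth_extend[OF step(2) step(3) finite_comm_layer[OF finite_gens] order_refl]
    by (simp add: comm_layers_from_Suc)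
qed

lemma word_growth: "poly_bounded (\<lambda>L. card (word_ball G T L))"
proof (cases "c = 0")
  case True
  then have "word_ball G T L \<subseteq> {\<one>}" for L
    using word_ball_closed[OF gens_closed] lower_central_trivial by auto
  then have card_le: "card (word_ball G T L) \<le> 1" for L
    using card_mono[of "{\<one>}"] by fastforce
  show ?thesis by (rule poly_bounded_le[OF poly_bounded_const[of 1]]) (fact card_le)
next
  case False
  then have "T \<subseteq> layers_from 0"
    by (auto simp: comm_layers_from_def sym_closure_def intro!: bexI[of _ 0])
  then have card_le: "card (word_ball G T L) \<le> card (word_ball G (layers_from 0) L)" for L
    by (intro card_mono finite_word_ball finite_comm_layers_from finite_gens word_ball_mono) auto
  show ?thesis by (rule poly_bounded_le[OF word_growth_layers_from[of 0]]) (simp_all add: card_le)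
qed

end

lemma nilpotent_word_growth:
  assumes "nilpotent_group G" "T \<subseteq> carrier G" "finite T"
  shows "poly_bounded (\<lambda>L. card (word_ball G T L))"
proof -
  obtain c where "group G" "lower_central G c = {\<one>\<^bsub>G\<^esub>}"
    using assms(1) unfolding nilpotent_group_def by blast
  then interpret nilpotent_words G T c
    using assms(2,3) by (simp add: nilpotent_words_def nilpotent_words_axioms_def)
  show ?thesis by (rule word_growth)
qed

section \<open>Subgroups of finite index\<close>

definition schreier_gens :: "('a, 'b) monoid_scheme \<Rightarrow> 'a set \<Rightarrow> 'a set \<Rightarrow> 'a set \<Rightarrow> 'a set" where
  "schreier_gens G H R T =
     H \<inter> {r \<otimes>\<^bsub>G\<^esub> t \<otimes>\<^bsub>G\<^esub> inv\<^bsub>G\<^esub> r' | r t r'. r \<in> R \<and> t \<in> T \<and> r' \<in> R}"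

lemma finite_schreier_gens: "finite R \<Longrightarrow> finite T \<Longrightarrow> finite (schreier_gens G H R T)"
proof -
  assume "finite R" "finite T"
  then have "finite ((\<lambda>(r, t, r'). r \<otimes>\<^bsub>G\<^esub> t \<otimes>\<^bsub>G\<^esub> inv\<^bsub>G\<^esub> r') ` (R \<times> T \<times> R))" by blast
  moreover have "{r \<otimes>\<^bsub>G\<^esub> t \<otimes>\<^bsub>G\<^esub> inv\<^bsub>G\<^esub> r' | r t r'. r \<in> R \<and> t \<in> T \<and> r' \<in> R}
      = (\<lambda>(r, t, r'). r \<otimes>\<^bsub>G\<^esub> t \<otimes>\<^bsub>G\<^esub> inv\<^bsub>G\<^esub> r') ` (R \<times> T \<times> R)"
    by force
  ultimately show ?thesis by (simp add: schreier_gens_def)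
qed

context group
begin

lemma finite_right_transversal:
  assumes H: "subgroup H G" and fin: "finite (rcosets H)"
  obtains R where "finite R" "R \<subseteq> carrier G" "\<one> \<in> R"
    "\<And>g. g \<in> carrier G \<Longrightarrow> \<exists>h\<in>H. \<exists>r\<in>R. g = h \<otimes> r"
proof
  let ?R = "insert \<one> ((\<lambda>C. SOME x. x \<in> C) ` (rcosets H))"
  interpret H: subgroup H G by (rule H)
  show "finite ?R" using fin by simp
  show "?R \<subseteq> carrier G"
  proof -
    have "(SOME x. x \<in> C) \<in> C" if "C \<in> rcosets H" for C
      using H.rcosets_non_empty[OF that] by (simp add: some_in_eq)
    then show ?thesis using H.rcosets_carrier[OF is_group] by auto
  qed
  show "\<one> \<in> ?R" by simp
  fix g assume g: "g \<in> carrier G"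
  let ?r = "SOME x. x \<in> H #> g"
  have "?r \<in> H #> g" using rcos_self[OF g H] by (rule someI)
  then obtain h where h: "h \<in> H" "?r = h \<otimes> g" unfolding r_coset_def by blast
  then have "g = inv h \<otimes> ?r" using g by (simp add: inv_mult_cancel_left)
  moreover have "?r \<in> ?R" using rcosetsI[OF H.subset g] by blast
  ultimately show "\<exists>h\<in>H. \<exists>r\<in>?R. g = h \<otimes> r" using h(1) by blast
qed

lemma word_prod_schreier:
  assumes H: "subgroup H G" and R: "R \<subseteq> carrier G" "\<one> \<in> R"
    and decomp: "\<And>g. g \<in> carrier G \<Longrightarrow> \<exists>h\<in>H. \<exists>r\<in>R. g = h \<otimes> r"
    and T: "T \<subseteq> carrier G"
  shows "set xs \<subseteq> T \<Longrightarrow>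
    \<exists>h\<in>word_ball G (schreier_gens G H R T) (length xs). \<exists>r\<in>R. word_prod G xs = h \<otimes> r"
proof (induction xs rule: rev_induct)
  case Nil
  have "\<one> \<in> word_ball G (schreier_gens G H R T) 0" by (rule one_in_word_ball)
  then show ?case using R(2) by force
next
  case (snoc t xs)
  let ?T' = "schreier_gens G H R T"
  have T': "?T' \<subseteq> carrier G" using subgroup.subset[OF H] by (auto simp: schreier_gens_def)
  obtain h r where h: "h \<in> word_ball G ?T' (length xs)" and r: "r \<in> R"
    and eq: "word_prod G xs = h \<otimes> r"
    using snoc by auto
  have t: "t \<in> carrier G" and xs: "set xs \<subseteq> carrier G" using snoc.prems T by auto
  have rc: "r \<in> carrier G" and hc: "h \<in> carrier G"
    using r R h word_ball_closed[OF T'] by auto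
  obtain h' r' where h': "h' \<in> H" and r': "r' \<in> R" and eq': "r \<otimes> t = h' \<otimes> r'"
    using decomp[of "r \<otimes> t"] rc t by blast
  have r'c: "r' \<in> carrier G" and h'c: "h' \<in> carrier G" using r' R h' subgroup.subset[OF H] by auto
  have "h' = r \<otimes> t \<otimes> inv r'" using eq' r'c h'c by (simp add: m_assoc)
  then have "h' \<in> ?T'" using h' r t r' snoc.prems unfolding schreier_gens_def by auto
  then have "h \<otimes> h' \<in> word_ball G ?T' (length (xs @ [t]))"
    using word_ball_mult[OF T' h generator_in_word_ball[OF T', of h' 1]] by simp
  moreover have "word_prod G (xs @ [t]) = (h \<otimes> h') \<otimes> r'"
    using eq eq' xs t rc hc h'c r'c by (simp add: word_prod_append m_assoc)
  ultimately show ?case using r' by blast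
qed

lemma finite_index_word_growth:
  assumes H: "subgroup H G" "finite (rcosets H)"
    and growth_H: "\<And>T'. T' \<subseteq> H \<Longrightarrow> finite T' \<Longrightarrow> poly_bounded (\<lambda>L. card (word_ball G T' L))"
    and T: "T \<subseteq> carrier G" "finite T"
  shows "poly_bounded (\<lambda>L. card (word_ball G T L))"
proof -
  obtain R where R: "finite R" "R \<subseteq> carrier G" "\<one> \<in> R"
    and decomp: "\<And>g. g \<in> carrier G \<Longrightarrow> \<exists>h\<in>H. \<exists>r\<in>R. g = h \<otimes> r"
    using finite_right_transversal[OF H] by blast
  let ?T' = "schreier_gens G H R T"
  have fin: "finite ?T'" using finite_schreier_gens[OF R(1) T(2)] .
  have "card (word_ball G T L) \<le> card (word_ball G ?T' L) * card R" for L
  proof -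
    let ?P = "word_ball G ?T' L \<times> R"
    have "word_ball G T L \<subseteq> (\<lambda>(h, r). h \<otimes> r) ` ?P"
    proof
      fix y assume "y \<in> word_ball G T L"
      then obtain xs where xs: "set xs \<subseteq> T" "length xs \<le> L" "y = word_prod G xs"
        by (auto elim: word_ballE)
      then obtain h r where "h \<in> word_ball G ?T' (length xs)" "r \<in> R" "y = h \<otimes> r"
        using word_prod_schreier[OF H(1) R(2,3) decomp T(1)] by blast
      moreover have "word_ball G ?T' (length xs) \<subseteq> word_ball G ?T' L"
        using xs(2) by (intro word_ball_mono) auto
      ultimately show "y \<in> (\<lambda>(h, r). h \<otimes> r) ` ?P" by force
    qed
    moreover have "finite ?P" using finite_word_ball[OF fin] R(1) by blast
    ultimately have "card (word_ball G T L) \<le> card ?P"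
      using card_mono card_image_le finite_imageI le_trans by metis
    then show ?thesis by (simp add: card_cartesian_product)
  qed
  moreover have "poly_bounded (\<lambda>L. card (word_ball G ?T' L) * card R)"
    using growth_H[OF _ fin] by (intro poly_bounded_mult poly_bounded_const) (auto simp: schreier_gens_def)
  ultimately show ?thesis by (auto intro: poly_bounded_le)
qed

lemma virtually_nilpotent_word_growth:
  assumes "virtually_nilpotent G" "T \<subseteq> carrier G" "finite T"
  shows "poly_bounded (\<lambda>L. card (word_ball G T L))"
proof -
  obtain H where H: "subgroup H G" "finite (rcosets H)" "nilpotent_group (G\<lparr>carrier := H\<rparr>)"
    using assms(1) unfolding virtually_nilpotent_def by blast
  have "poly_bounded (\<lambda>L. card (word_ball G T' L))" if "T' \<subseteq> H" "finite T'" for T'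
    using nilpotent_word_growth[OF H(3)] that by (simp add: word_ball_subgroup)
  then show ?thesis using finite_index_word_growth[OF H(1,2)] assms(2,3) by blast
qed

end

section \<open>The coset group\<close>

definition lifted_gens :: "('a, 'b) monoid_scheme \<Rightarrow> ('a \<Rightarrow> 'a) set \<Rightarrow> 'a set set \<Rightarrow> 'a set" where
  "lifted_gens G A S = (\<lambda>(a, s). a (rep G A s)) ` (A \<times> S)"

lemma finite_lifted_gens: "finite A \<Longrightarrow> finite S \<Longrightarrow> finite (lifted_gens G A S)"
  by (simp add: lifted_gens_def)

locale coset_group = group +
  fixes A :: "('a \<Rightarrow> 'a) set"
  assumes aut_subgroup: "aut_subgroup G A" and finite_auts: "finite A"
begin

lemma aut_iso: "a \<in> A \<Longrightarrow> a \<in> iso G G"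
  using aut_subgroup unfolding aut_subgroup_def Aut_def by blast

lemma aut_closed: "a \<in> A \<Longrightarrow> g \<in> carrier G \<Longrightarrow> a g \<in> carrier G"
  using aut_iso by (auto simp: iso_def intro: hom_in_carrier)

lemma aut_mult: "a \<in> A \<Longrightarrow> x \<in> carrier G \<Longrightarrow> y \<in> carrier G \<Longrightarrow> a (x \<otimes> y) = a x \<otimes> a y"
  using aut_iso by (auto simp: iso_def intro: hom_mult)

lemma aut_comp: "a \<in> A \<Longrightarrow> b \<in> A \<Longrightarrow> (\<lambda>x\<in>carrier G. a (b x)) \<in> A"
  using aut_subgroup unfolding aut_subgroup_def by blast

lemma aut_inverse: "b \<in> A \<Longrightarrow> restrict (inv_into (carrier G) b) (carrier G) \<in> A"
  using aut_subgroup unfolding aut_subgroup_def by blast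

lemma aut_inverse_left:
  "b \<in> A \<Longrightarrow> y \<in> carrier G \<Longrightarrow> restrict (inv_into (carrier G) b) (carrier G) (b y) = y"
  using aut_iso aut_closed by (auto simp: iso_def bij_betw_def)

lemma aut_inverse_right:
  "b \<in> A \<Longrightarrow> y \<in> carrier G \<Longrightarrow> b (restrict (inv_into (carrier G) b) (carrier G) y) = y"
  using aut_iso by (auto simp: iso_def bij_betw_def f_inv_into_f)

lemma orbit_aut: assumes b: "b \<in> A" and g: "g \<in> carrier G"
  shows "orbit A (b g) = orbit A g"
proof
  have "a (b g) = (\<lambda>x\<in>carrier G. a (b x)) g" for a
    using g by simp
  then show "orbit A (b g) \<subseteq> orbit A g"
    using aut_comp[OF _ b] unfolding orbit_def by blast
  let ?b' = "restrict (inv_into (carrier G) b) (carrier G)"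
  have "a g = (\<lambda>x\<in>carrier G. a (?b' x)) (b g)" for a
    using aut_closed[OF b g] aut_inverse_left[OF b g] by simp
  then show "orbit A g \<subseteq> orbit A (b g)"
    using aut_comp[OF _ aut_inverse[OF b]] unfolding orbit_def by blast
qed

lemma mem_orbit_self: "g \<in> carrier G \<Longrightarrow> g \<in> orbit A g"
  using aut_subgroup unfolding orbit_def aut_subgroup_def
  by (auto intro!: image_eqI[where x="\<lambda>x\<in>carrier G. x"])

lemma rep_carrier_orbit:
  assumes "x \<in> coset_carrier G A"
  shows "rep G A x \<in> carrier G" "orbit A (rep G A x) = x"
proof -
  have "\<exists>g. g \<in> carrier G \<and> orbit A g = x" using assms unfolding coset_carrier_def by blast
  then have "rep G A x \<in> carrier G \<and> orbit A (rep G A x) = x"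
    unfolding rep_def by (rule someI_ex)
  then show "rep G A x \<in> carrier G" "orbit A (rep G A x) = x" by auto
qed

lemma lifted_gens_closed: "S \<subseteq> coset_carrier G A \<Longrightarrow> lifted_gens G A S \<subseteq> carrier G"
  unfolding lifted_gens_def using rep_carrier_orbit aut_closed by auto

text \<open>The representative chosen by \<open>rep\<close> for \<open>orbit A g\<close> is some \<open>b g\<close>; applying \<open>b\<^sup>-\<^sup>1\<close>,
  which does not change orbits, moves the product back to one starting with \<open>g\<close>.\<close>

lemma cmult_orbit:
  assumes g: "g \<in> carrier G" and s: "s \<in> coset_carrier G A"
    and y: "y \<in># cmult G A (orbit A g) s"
  shows "\<exists>a\<in>A. y = orbit A (g \<otimes> a (rep G A s))"
proof -
  let ?m = "orbit A g"
  obtain a where a: "a \<in> A" and y_eq: "y = orbit A (rep G A ?m \<otimes> a (rep G A s))"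
    using y finite_auts unfolding cmult_def by auto
  have m: "?m \<in> coset_carrier G A" using g unfolding coset_carrier_def by blast
  have "rep G A ?m \<in> ?m"
    using mem_orbit_self[OF rep_carrier_orbit(1)[OF m]] rep_carrier_orbit(2)[OF m] by simp
  then obtain b where b: "b \<in> A" and rep_eq: "rep G A ?m = b g" unfolding orbit_def by blast
  let ?b' = "restrict (inv_into (carrier G) b) (carrier G)"
  let ?c = "\<lambda>x\<in>carrier G. ?b' (a x)"
  have rs: "rep G A s \<in> carrier G" using rep_carrier_orbit(1)[OF s] .
  then have cs: "?c (rep G A s) \<in> carrier G"
    using aut_closed aut_comp[OF aut_inverse[OF b] a] by blast
  have "b (g \<otimes> ?c (rep G A s)) = rep G A ?m \<otimes> a (rep G A s)"
    using aut_mult[OF b g cs] rep_eq rs aut_inverse_right[OF b aut_closed[OF a rs]] by simp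
  then have "y = orbit A (g \<otimes> ?c (rep G A s))"
    using y_eq orbit_aut[OF b m_closed[OF g cs]] by simp
  then show ?thesis using aut_comp[OF aut_inverse[OF b] a] by blast
qed

lemma cprod_unit_orbit_word:
  assumes S: "S \<subseteq> coset_carrier G A"
  shows "set ss \<subseteq> S \<Longrightarrow> y \<in># cprod G A (cunit G A) ss \<Longrightarrow>
    \<exists>g\<in>word_ball G (lifted_gens G A S) (length ss). y = orbit A g"
proof (induction ss arbitrary: y rule: rev_induct)
  case Nil
  have "\<one> \<in> word_ball G (lifted_gens G A S) 0" by (rule one_in_word_ball)
  with Nil show ?case by (auto simp: cprod_def cunit_def)
next
  case (snoc s ss)
  let ?T = "lifted_gens G A S"
  have T: "?T \<subseteq> carrier G" using lifted_gens_closed[OF S] .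
  obtain m where m: "m \<in># cprod G A (cunit G A) ss" and y: "y \<in># cmult G A m s"
    using snoc.prems(2) by (auto simp: cprod_def cmult_ms_def)
  obtain g where g: "g \<in> word_ball G ?T (length ss)" and m_eq: "m = orbit A g"
    using snoc m by auto
  have s: "s \<in> S" using snoc.prems(1) by simp
  obtain a where a: "a \<in> A" and y_eq: "y = orbit A (g \<otimes> a (rep G A s))"
    using cmult_orbit[of g s y] g word_ball_closed[OF T] s S y m_eq by blast
  have "a (rep G A s) \<in> word_ball G ?T 1"
    using a s by (intro generator_in_word_ball T) (auto simp: lifted_gens_def)
  then have "g \<otimes> a (rep G A s) \<in> word_ball G ?T (length (ss @ [s]))"
    using word_ball_mult[OF T g, of _ 1] by simp
  then show ?case using y_eq by blast
qed

lemma card_cball_le: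
  assumes "finite S" "S \<subseteq> coset_carrier G A"
  shows "card (cball G A S (cunit G A) r) \<le> card (word_ball G (lifted_gens G A S) r)"
proof -
  have "cball G A S (cunit G A) r \<subseteq> orbit A ` word_ball G (lifted_gens G A S) r"
  proof
    fix y assume "y \<in> cball G A S (cunit G A) r"
    then obtain ss where ss: "length ss \<le> r" "set ss \<subseteq> S" "y \<in># cprod G A (cunit G A) ss"
      unfolding cball_def by blast
    then obtain g where "g \<in> word_ball G (lifted_gens G A S) (length ss)" "y = orbit A g"
      using cprod_unit_orbit_word[OF assms(2)] by blast
    then show "y \<in> orbit A ` word_ball G (lifted_gens G A S) r"
      using word_ball_mono[OF order_refl ss(1), of G "lifted_gens G A S"] by blast
  qed
  moreover have fin: "finite (word_ball G (lifted_gens G A S) r)"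
    using assms(1) finite_auts by (intro finite_word_ball finite_lifted_gens)
  ultimately have "card (cball G A S (cunit G A) r) \<le> card (orbit A ` word_ball G (lifted_gens G A S) r)"
    using card_mono[OF finite_imageI[OF fin]] by blast
  also have "\<dots> \<le> card (word_ball G (lifted_gens G A S) r)"
    using fin by (rule card_image_le)
  finally show ?thesis .
qed

end

theorem mainTheorem2:
  fixes G :: "('a, 'b) monoid_scheme" and A :: "('a \<Rightarrow> 'a) set" and n :: nat
  assumes "group G"
    and "finitely_generated G"
    and "virtually_nilpotent G"
    and "aut_subgroup G A"
    and "finite A"
    and "card A = n"
  shows "\<forall>S. finite S \<and> cgenerates G A S \<longrightarrow>
           (\<exists>C k::real. C > 0 \<and> k > 0 \<and>
              (\<forall>r::nat. r \<ge> 1 \<longrightarrow> real (card (cball G A S (cunit G A) r)) \<le> C * real r powr k))"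
proof (intro allI impI)
  fix S assume S: "finite S \<and> cgenerates G A S"
  interpret coset_group G A
    using assms(1,4,5) by (simp add: coset_group_def coset_group_axioms_def)
  have S_carrier: "S \<subseteq> coset_carrier G A" using S by (simp add: cgenerates_def)
  have "poly_bounded (\<lambda>r. card (word_ball G (lifted_gens G A S) r))"
    using virtually_nilpotent_word_growth[OF assms(3) lifted_gens_closed[OF S_carrier]]
      finite_lifted_gens[OF assms(5)] S by blast
  then have "poly_bounded (\<lambda>r. card (cball G A S (cunit G A) r))"
    by (rule poly_bounded_le) (use card_cball_le S S_carrier in blast)
  then show "\<exists>C k::real. C > 0 \<and> k > 0 \<and>
      (\<forall>r::nat. r \<ge> 1 \<longrightarrow> real (card (cball G A S (cunit G A) r)) \<le> C * real r powr k)"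
    by (rule poly_bounded_powr_bound)
qed

end
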